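(* Let $H\in(\tfrac12,1)$, $\sigma>0$, $h=\frac H2+\frac14\in(\frac12,\frac34)$. Then $$\operatorname{Var}(\widehat{\mathcal{Y}}_n^H)=\sum_{i=i_n}^{n-1}(j_n^H(i))^2\xrightarrow[n\to\infty]{}4g_H^2\sum_{k=1}^\infty\rho_h^2(k)<\infty.$$
   Context: $c_H=\sqrt{\frac{2H\,\Gamma(\frac32-H)}{\Gamma(H+\frac12)\Gamma(2-2H)}}$, $C_H=c_H(H-\frac12)$, $g_H=\frac{\sigma c_H}{H+\frac12}$, $\rho_h(k)=\frac12((k+1)^{2h}+(k-1)^{2h}-2k^{2h})$, and for $1\le i<n$, $j_n^H(i)=\sigma C_H\int_{i-1}^i x^{\frac12-H}\Big(\int_0^1(v+n-1)^{H-\frac12}(v+n-1-x)^{H-\frac32}dv\Big)dx$. For $n\ge2$, $x_n=n-1-\Big(\big(1+\frac1{n-1}\big)^{\frac2{3-2H}}-1\Big)^{-1}$ and $i_n=\lfloor x_n\rfloor+1$. With $(\xi_i)$ i.i.d., $P(\xi_i=\pm1)=\frac12$, $\widehat{\mathcal{Y}}_n^H=\sum_{i=i_n}^{n-1}j_n^H(i)\xi_i$. *)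

theory Defs
  imports "HOL-Probability.Probability"
begin

definition c_H :: "real \<Rightarrow> real" where
  "c_H H = sqrt (2 * H * Gamma (3/2 - H) / (Gamma (H + 1/2) * Gamma (2 - 2*H)))"

definition C_H :: "real \<Rightarrow> real" where
  "C_H H = c_H H * (H - 1/2)"

definition g_H :: "real \<Rightarrow> real \<Rightarrow> real" where
  "g_H \<sigma> H = \<sigma> * c_H H / (H + 1/2)"

definition rho :: "real \<Rightarrow> nat \<Rightarrow> real" where
  "rho h k = ((real k + 1) powr (2*h) + (real k - 1) powr (2*h) - 2 * real k powr (2*h)) / 2"

text \<open>j_n^H(i), meaningful for 1 \<le> i < n (Lebesgue integrals over closed intervals).\<close>
definition jnH :: "real \<Rightarrow> real \<Rightarrow> nat \<Rightarrow> nat \<Rightarrow> real" where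
  "jnH \<sigma> H n i = \<sigma> * C_H H *
     (LINT x:{real i - 1 .. real i}|lborel.
        x powr (1/2 - H) *
        (LINT v:{0..1}|lborel.
           (v + real n - 1) powr (H - 1/2) * (v + real n - 1 - x) powr (H - 3/2)))"

definition x_n :: "real \<Rightarrow> nat \<Rightarrow> real" where
  "x_n H n = real n - 1 - 1 / ((1 + 1 / (real n - 1)) powr (2 / (3 - 2*H)) - 1)"

definition i_n :: "real \<Rightarrow> nat \<Rightarrow> int" where
  "i_n H n = \<lfloor>x_n H n\<rfloor> + 1"

text \<open>Index set {i_n, ..., n-1}, restricted to 1 \<le> i where j_n^H is defined.\<close>
definition idx :: "real \<Rightarrow> nat \<Rightarrow> nat set" where
  "idx H n = {i. 1 \<le> i \<and> i < n \<and> i_n H n \<le> int i}"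

definition Yhat :: "real \<Rightarrow> real \<Rightarrow> (nat \<Rightarrow> 'a \<Rightarrow> real) \<Rightarrow> nat \<Rightarrow> 'a \<Rightarrow> real" where
  "Yhat \<sigma> H \<xi> n \<omega> = (\<Sum>i\<in>idx H n. jnH \<sigma> H n i * \<xi> i \<omega>)"

end

theory Submission
  imports Defs "HOL-Real_Asymp.Real_Asymp"
begin

text \<open>Put \<open>\<delta> = H - 1/2\<close>. The factor \<open>(v + n - 1) powr \<delta>\<close> of the inner integral of \<open>j_n^H(i)\<close>
  lies between \<open>(n - 1) powr \<delta>\<close> and \<open>n powr \<delta>\<close>, and what remains integrates to the increment
  \<open>((n - x) powr \<delta> - (n - 1 - x) powr \<delta>) / \<delta>\<close>. Integrating these increments over \<open>[i - 1, i]\<close>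
  produces the second difference of \<open>t powr (H + 1/2)\<close> at \<open>n - i\<close>, i.e. a multiple of \<open>\<rho>_h(n - i)\<close>,
  so that \<open>j_n^H(i)\<close> is squeezed between \<open>2 g_H \<rho>_h(n - i)\<close> and \<open>(n / (i - 1)) powr \<delta>\<close> times it.
  Every retained index satisfies \<open>i > \<delta> (n - 1)\<close>, hence the ratio is uniformly bounded and tends
  to \<open>1\<close> for fixed \<open>n - i\<close>; since \<open>\<rho>_h(k) = O(k powr (\<delta> - 1))\<close>, Tannery's theorem gives the limit.
  The variance identity is the orthonormality of independent Rademacher variables.\<close>

section \<open>Real powers\<close>

lemma set_integral_FTC_interior:
  fixes f F :: "real \<Rightarrow> real"
  assumes "a \<le> b" "continuous_on {a..b} f" "continuous_on {a..b} F"
    and "\<And>x. x \<in> {a<..<b} \<Longrightarrow> (F has_real_derivative f x) (at x)"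
  shows "(LINT x:{a..b}|lborel. f x) = F b - F a"
proof -
  have "set_integrable lborel {a..b} f"
    by (rule borel_integrable_atLeastAtMost') (use assms in auto)
  moreover have "(f has_integral (F b - F a)) {a..b}"
    by (rule fundamental_theorem_of_calculus_interior)
       (use assms in \<open>auto simp: has_real_derivative_iff_has_vector_derivative[symmetric]\<close>)
  ultimately show ?thesis
    by (simp add: set_borel_integral_eq_integral(2) integral_unique)
qed

lemma set_integral_shifted_powr:
  fixes c d :: real
  assumes "c > 0" "d > 0"
  shows "(LINT v:{0..1}|lborel. (v + c) powr (d - 1)) = ((1 + c) powr d - c powr d) / d"
proof -
  have "(LINT v:{0..1}|lborel. (v + c) powr (d - 1)) = (1 + c) powr d / d - (0 + c) powr d / d"
    by (rule set_integral_FTC_interior[where F = "\<lambda>v. (v + c) powr d / d"])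
       (use assms in \<open>auto intro!: continuous_intros derivative_eq_intros\<close>)
  then show ?thesis by (simp add: diff_divide_distrib)
qed

lemma set_integral_powr_increment:
  fixes N I d :: real
  assumes "I \<le> N - 1" "d > 0"
  shows "(LINT x:{I - 1..I}|lborel. ((N - x) powr d - (N - 1 - x) powr d) / d)
     = ((N - I + 1) powr (d + 1) + (N - I - 1) powr (d + 1) - 2 * (N - I) powr (d + 1))
       / (d * (d + 1))"
proof -
  define F where "F = (\<lambda>x. ((N - 1 - x) powr (d + 1) - (N - x) powr (d + 1)) / (d * (d + 1)))"
  have "(LINT x:{I - 1..I}|lborel. ((N - x) powr d - (N - 1 - x) powr d) / d) = F I - F (I - 1)"
  proof (rule set_integral_FTC_interior)
    show "continuous_on {I - 1..I} (\<lambda>x. ((N - x) powr d - (N - 1 - x) powr d) / d)"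
      using assms by (auto intro!: continuous_intros continuous_on_powr')
    show "continuous_on {I - 1..I} F"
      unfolding F_def using assms by (auto intro!: continuous_intros continuous_on_powr')
  next
    fix x assume x: "x \<in> {I - 1<..<I}"
    have "((\<lambda>x. (N - 1 - x) powr (d + 1) - (N - x) powr (d + 1)) has_real_derivative
        (d + 1) * ((N - x) powr d - (N - 1 - x) powr d)) (at x)"
      using assms x by (auto intro!: derivative_eq_intros simp: algebra_simps)
    from DERIV_cdivide[OF this, of "d * (d + 1)"]
    show "(F has_real_derivative ((N - x) powr d - (N - 1 - x) powr d) / d) (at x)"
      unfolding F_def using assms by (simp only: mult.commute[of d] nonzero_mult_div_cancel_left) simp
  qed (use assms in auto)
  also have "\<dots> = ((N - I + 1) powr (d + 1) + (N - I - 1) powr (d + 1) - 2 * (N - I) powr (d + 1))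
       / (d * (d + 1))"
    unfolding F_def by (simp add: diff_divide_distrib add_divide_distrib algebra_simps)
  finally show ?thesis .
qed

lemma powr_Bernoulli_ge:
  fixes p t :: real
  assumes "1 \<le> p" "0 \<le> t"
  shows "1 + p * t \<le> (1 + t) powr p"
proof -
  let ?f = "\<lambda>y. (1 + y) powr p - 1 - p * y"
  have "?f 0 \<le> ?f t"
  proof (rule DERIV_nonneg_imp_nondecreasing[OF assms(2)])
    fix x assume x: "0 \<le> x" "x \<le> t"
    have "1 \<le> (1 + x) powr (p - 1)" using x assms by (intro ge_one_powr_ge_zero) auto
    then have "0 \<le> p * (1 + x) powr (p - 1) - p"
      using assms mult_left_mono[of 1 "(1 + x) powr (p - 1)" p] by simp
    moreover have "DERIV ?f x :> p * (1 + x) powr (p - 1) - p"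
      using x by (auto intro!: derivative_eq_intros)
    ultimately show "\<exists>y. DERIV ?f x :> y \<and> y \<ge> 0" by blast
  qed
  then show ?thesis by simp
qed

lemma powr_Bernoulli_le:
  fixes p t :: real
  assumes "0 \<le> p" "p \<le> 1" "0 \<le> t"
  shows "(1 + t) powr p \<le> 1 + p * t"
proof -
  let ?f = "\<lambda>y. 1 + p * y - (1 + y) powr p"
  have "?f 0 \<le> ?f t"
  proof (rule DERIV_nonneg_imp_nondecreasing[OF assms(3)])
    fix x assume x: "0 \<le> x" "x \<le> t"
    have "(1 + x) powr (p - 1) \<le> 1 powr (p - 1)" using x assms by (intro powr_mono2') auto
    then have "0 \<le> p - p * (1 + x) powr (p - 1)" using assms by (simp add: mult_left_le)
    moreover have "DERIV ?f x :> p - p * (1 + x) powr (p - 1)"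
      using x by (auto intro!: derivative_eq_intros)
    ultimately show "\<exists>y. DERIV ?f x :> y \<and> y \<ge> 0" by blast
  qed
  then show ?thesis by simp
qed

section \<open>Sums of independent Rademacher variables\<close>

lemma (in prob_space) AE_Rademacher:
  fixes X :: "'a \<Rightarrow> real"
  assumes X: "X \<in> borel_measurable M"
    and "prob {\<omega> \<in> space M. X \<omega> = 1} = 1/2" "prob {\<omega> \<in> space M. X \<omega> = -1} = 1/2"
  shows "AE \<omega> in M. X \<omega> = 1 \<or> X \<omega> = -1"
proof -
  let ?A = "{\<omega> \<in> space M. X \<omega> = 1}" and ?B = "{\<omega> \<in> space M. X \<omega> = -1}"
  note X[measurable]
  have ev: "?A \<in> events" "?B \<in> events" by measurable
  then have "prob (?A \<union> ?B) = prob ?A + prob ?B" by (intro finite_measure_Union) auto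
  then have "prob (?A \<union> ?B) = 1" using assms by simp
  then have "AE \<omega> in M. \<omega> \<in> ?A \<union> ?B" by (rule AE_prob_1)
  then show ?thesis by eventually_elim auto
qed

lemma (in prob_space) expectation_Rademacher:
  fixes X :: "'a \<Rightarrow> real"
  assumes X: "X \<in> borel_measurable M"
    and p: "prob {\<omega> \<in> space M. X \<omega> = 1} = 1/2" "prob {\<omega> \<in> space M. X \<omega> = -1} = 1/2"
  shows "expectation X = 0"
proof -
  let ?A = "{\<omega> \<in> space M. X \<omega> = 1}" and ?B = "{\<omega> \<in> space M. X \<omega> = -1}"
  note X[measurable]
  have ev: "?A \<in> events" "?B \<in> events" by measurable
  have "expectation X = expectation (\<lambda>\<omega>. indicator ?A \<omega> - indicator ?B \<omega> :: real)"
  proof (rule integral_cong_AE)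
    show "AE \<omega> in M. X \<omega> = indicator ?A \<omega> - indicator ?B \<omega>"
      using AE_Rademacher[OF assms] AE_space by eventually_elim (auto simp: indicator_def)
  qed (use ev in auto)
  also have "\<dots> = prob ?A - prob ?B"
    using ev by (simp add: Bochner_Integration.integral_diff integrable_real_indicator
        emeasure_eq_measure)
  finally show ?thesis using p by simp
qed

lemma (in prob_space) variance_Rademacher_sum:
  fixes \<xi> :: "nat \<Rightarrow> 'a \<Rightarrow> real"
  assumes meas: "\<And>i. \<xi> i \<in> borel_measurable M"
    and ind: "indep_vars (\<lambda>_. borel) \<xi> UNIV"
    and p: "\<And>i. prob {\<omega> \<in> space M. \<xi> i \<omega> = 1} = 1/2" "\<And>i. prob {\<omega> \<in> space M. \<xi> i \<omega> = -1} = 1/2"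
    and "finite I"
  shows "variance (\<lambda>\<omega>. \<Sum>i\<in>I. c i * \<xi> i \<omega>) = (\<Sum>i\<in>I. (c i)\<^sup>2)"
proof -
  note AE = AE_Rademacher[OF meas p] and E0 = expectation_Rademacher[OF meas p]
  have int1: "integrable M (\<xi> i)" for i
    by (rule integrable_const_bound[where B = 1]) (use AE[of i] meas in \<open>auto elim!: AE_mp\<close>)
  have int2: "integrable M (\<lambda>\<omega>. \<xi> i \<omega> * \<xi> j \<omega>)" for i j
    by (rule integrable_const_bound[where B = 1])
       (use AE[of i] AE[of j] meas in \<open>auto elim!: AE_mp\<close>)
  have orth: "expectation (\<lambda>\<omega>. \<xi> i \<omega> * \<xi> j \<omega>) = (if j = i then 1 else 0)" for i j
  proof (cases "j = i")
    case True
    have "expectation (\<lambda>\<omega>. \<xi> i \<omega> * \<xi> i \<omega>) = expectation (\<lambda>\<omega>. 1)"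
      by (rule integral_cong_AE) (use AE[of i] meas in \<open>auto elim!: AE_mp\<close>)
    then show ?thesis using True by (simp add: prob_space)
  next
    case False
    have "indep_vars (\<lambda>_. borel) \<xi> {i, j}" by (rule indep_vars_subset[OF ind]) auto
    then have "expectation (\<lambda>\<omega>. \<Prod>k\<in>{i, j}. \<xi> k \<omega>) = (\<Prod>k\<in>{i, j}. expectation (\<xi> k))"
      by (intro indep_vars_lebesgue_integral) (use int1 in auto)
    then show ?thesis using False E0 by simp
  qed
  have "expectation (\<lambda>\<omega>. \<Sum>i\<in>I. c i * \<xi> i \<omega>) = 0"
    using int1 E0 by (simp add: Bochner_Integration.integral_sum)
  then have "variance (\<lambda>\<omega>. \<Sum>i\<in>I. c i * \<xi> i \<omega>)
      = expectation (\<lambda>\<omega>. \<Sum>i\<in>I. \<Sum>j\<in>I. c i * c j * (\<xi> i \<omega> * \<xi> j \<omega>))"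
    by (simp add: power2_eq_square sum_product mult_ac)
  also have "\<dots> = (\<Sum>i\<in>I. \<Sum>j\<in>I. c i * c j * expectation (\<lambda>\<omega>. \<xi> i \<omega> * \<xi> j \<omega>))"
    by (simp add: Bochner_Integration.integral_sum int2)
  also have "\<dots> = (\<Sum>i\<in>I. (c i)\<^sup>2)"
    using \<open>finite I\<close> by (simp add: orth power2_eq_square if_distrib cong: if_cong)
  finally show ?thesis .
qed

section \<open>The second differences \<open>\<rho>_h\<close>\<close>

lemma rho_eq_set_integral:
  fixes H h :: real and k :: nat
  assumes H: "1/2 < H" and h: "h = H/2 + 1/4" and k: "1 \<le> k"
  shows "rho h k = (H - 1/2) * (H + 1/2) / 2 *
     (LINT x:{0..1}|lborel. ((real k + 1 - x) powr (H - 1/2) - (real k - x) powr (H - 1/2)) / (H - 1/2))"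
proof -
  have "(LINT x:{1 - 1..1}|lborel.
        ((real k + 1 - x) powr (H - 1/2) - (real k + 1 - 1 - x) powr (H - 1/2)) / (H - 1/2))
      = ((real k + 1 - 1 + 1) powr (H - 1/2 + 1) + (real k + 1 - 1 - 1) powr (H - 1/2 + 1)
         - 2 * (real k + 1 - 1) powr (H - 1/2 + 1)) / ((H - 1/2) * (H - 1/2 + 1))"
    by (rule set_integral_powr_increment) (use H k in auto)
  then have "(LINT x:{0..1}|lborel.
        ((real k + 1 - x) powr (H - 1/2) - (real k - x) powr (H - 1/2)) / (H - 1/2))
      = ((real k + 1) powr (2 * h) + (real k - 1) powr (2 * h) - 2 * real k powr (2 * h))
        / ((H - 1/2) * (H + 1/2))"
    using h by (simp add: add_ac)
  moreover have "(H - 1/2) * (H + 1/2) \<noteq> 0" using H by simp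
  ultimately show ?thesis by (simp add: rho_def)
qed

lemma set_integral_powr_increment_eq_rho:
  fixes H h :: real and n i :: nat
  assumes H: "1/2 < H" and h: "h = H/2 + 1/4" and i: "i < n"
  shows "(LINT x:{real i - 1..real i}|lborel.
      ((real n - x) powr (H - 1/2) - (real n - 1 - x) powr (H - 1/2)) / (H - 1/2))
    = 2 * rho h (n - i) / ((H - 1/2) * (H + 1/2))"
proof -
  have "2 * rho h (n - i) = (real n - real i + 1) powr (H - 1/2 + 1)
      + (real n - real i - 1) powr (H - 1/2 + 1) - 2 * (real n - real i) powr (H - 1/2 + 1)"
    using h i by (simp add: rho_def of_nat_diff add_ac)
  moreover have "H - 1/2 + 1 = H + 1/2" by simp
  ultimately show ?thesis
    using set_integral_powr_increment[of "real i" "real n" "H - 1/2"] H i by (simp add: ac_simps)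
qed

lemma rho_nonneg:
  fixes H h :: real and k :: nat
  assumes H: "1/2 < H" and h: "h = H/2 + 1/4" and k: "1 \<le> k"
  shows "0 \<le> rho h k"
proof -
  define d where "d = H - 1/2"
  have d: "0 < d" using H by (simp add: d_def)
  have "0 \<le> (LINT x:{0..1}|lborel. ((real k + 1 - x) powr d - (real k - x) powr d) / d)"
    (is "_ \<le> ?I")
  proof -
    have "(LINT x:{0..1::real}|lborel. 0) \<le> ?I"
      using k d by (intro set_integral_mono borel_integrable_atLeastAtMost')
         (auto intro!: divide_nonneg_pos powr_mono2 continuous_intros continuous_on_powr')
    then show ?thesis by simp
  qed
  moreover have "0 \<le> (H - 1/2) * (H + 1/2) / 2" using H by simp
  ultimately show ?thesis
    unfolding rho_eq_set_integral[OF H h k] d_def by (rule mult_nonneg_nonneg[rotated])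
qed

lemma rho_le_powr:
  fixes H h :: real and k :: nat
  assumes H: "1/2 < H" "H < 1" and h: "h = H/2 + 1/4" and k: "2 \<le> k"
  shows "rho h k \<le> (H - 1/2) * (H + 1/2) / 2 * (real k - 1) powr (H - 3/2)"
proof -
  define d where "d = H - 1/2"
  have d: "0 < d" "d \<le> 1" using H by (auto simp: d_def)
  define f where "f x = ((real k + 1 - x) powr d - (real k - x) powr d) / d" for x
  have f_le: "f x \<le> (real k - 1) powr (d - 1)" if x: "x \<in> {0..1}" for x
  proof -
    define y where "y = real k - x"
    have y: "real k - 1 \<le> y" "0 < y" using x k by (auto simp: y_def)
    have "real k + 1 - x = y * (1 + 1/y)" using y by (simp add: y_def field_simps)
    then have "(real k + 1 - x) powr d = y powr d * (1 + 1/y) powr d"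
      using y by (simp add: powr_mult)
    also have "\<dots> \<le> y powr d * (1 + d * (1/y))"
      using powr_Bernoulli_le[of d "1/y"] d y by (intro mult_left_mono) auto
    also have "\<dots> = y powr d + d * y powr (d - 1)"
      using y by (simp add: powr_diff field_simps)
    finally have "f x \<le> y powr (d - 1)" using d by (simp add: f_def y_def field_simps)
    also have "\<dots> \<le> (real k - 1) powr (d - 1)" using y k d by (intro powr_mono2') auto
    finally show ?thesis .
  qed
  have "(LINT x:{0..1}|lborel. f x) \<le> (LINT x:{0..1::real}|lborel. (real k - 1) powr (d - 1))"
    using f_le k d unfolding f_def
    by (intro set_integral_mono borel_integrable_atLeastAtMost')
       (auto intro!: continuous_intros continuous_on_powr')
  then have "(LINT x:{0..1}|lborel. f x) \<le> (real k - 1) powr (H - 3/2)"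
    by (simp add: set_integral_const d_def)
  moreover have "rho h k = (H - 1/2) * (H + 1/2) / 2 * (LINT x:{0..1}|lborel. f x)"
    using rho_eq_set_integral[OF H(1) h, of k] k unfolding f_def d_def by simp
  moreover have "0 \<le> (H - 1/2) * (H + 1/2) / 2" using H by simp
  ultimately show ?thesis by (simp add: mult_left_mono)
qed

lemma summable_rho_squared:
  fixes H h :: real
  assumes H: "1/2 < H" "H < 1" and h: "h = H/2 + 1/4"
  shows "summable (\<lambda>k. (rho h (Suc k))\<^sup>2)"
proof (rule summable_comparison_test_ev)
  define C where "C = (H - 1/2) * (H + 1/2) / 2"
  show "summable (\<lambda>k. C\<^sup>2 * real k powr (2 * H - 3))"
    by (rule summable_mult) (use H in \<open>simp add: summable_real_powr_iff\<close>)
  show "\<forall>\<^sub>F k in sequentially. norm ((rho h (Suc k))\<^sup>2) \<le> C\<^sup>2 * real k powr (2 * H - 3)"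
    using eventually_ge_at_top[of 1]
  proof eventually_elim
    case (elim k)
    have "0 \<le> rho h (Suc k)" "rho h (Suc k) \<le> C * real k powr (H - 3/2)"
      using rho_nonneg[OF H(1) h] rho_le_powr[OF H h, of "Suc k"] elim by (auto simp: C_def)
    then have "(rho h (Suc k))\<^sup>2 \<le> (C * real k powr (H - 3/2))\<^sup>2" by (intro power_mono) auto
    also have "\<dots> = C\<^sup>2 * real k powr (2 * H - 3)"
      by (simp add: power2_eq_square powr_add[symmetric] mult_ac)
    finally show ?case by simp
  qed
qed

section \<open>The index set\<close>

lemma x_n_bounds:
  fixes H :: real and n :: nat
  assumes H: "1/2 < H" "H < 1" and n: "2 \<le> n"
  shows "(real n - 1) * (H - 1/2) \<le> x_n H n" and "x_n H n \<le> 2 * (real n - 1) / 3"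
proof -
  define a where "a = 2 / (3 - 2 * H)"
  define t where "t = 1 / (real n - 1)"
  have t: "0 < t" "t \<le> 1" using n by (auto simp: t_def)
  have a: "1 \<le> a" "a \<le> 2" using H by (auto simp: a_def field_simps)
  define D where "D = (1 + t) powr a - 1"
  have x_n: "x_n H n = real n - 1 - 1 / D" unfolding x_n_def D_def a_def t_def by simp
  have at: "0 < a * t" using a t by simp
  have D_ge: "a * t \<le> D" using powr_Bernoulli_ge[OF a(1), of t] t by (simp add: D_def)
  have "(1 + t) powr a \<le> (1 + t) powr 2" using a t by (intro powr_mono) auto
  also have "\<dots> \<le> 1 + 3 * t" using t by (simp add: power2_eq_square algebra_simps mult_left_le)
  finally have D_le: "D \<le> 3 * t" by (simp add: D_def)
  have "1 / D \<le> 1 / (a * t)" using D_ge at by (intro divide_left_mono) auto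
  also have "\<dots> = (real n - 1) * (3 - 2 * H) / 2" using n H by (simp add: a_def t_def)
  finally show "(real n - 1) * (H - 1/2) \<le> x_n H n" unfolding x_n by (simp add: field_simps)
  have "1 / (3 * t) \<le> 1 / D" using D_ge D_le at by (intro divide_left_mono) auto
  then show "x_n H n \<le> 2 * (real n - 1) / 3" unfolding x_n using n by (simp add: t_def)
qed

lemma finite_idx: "finite (idx H n)"
  by (rule finite_subset[of _ "{..<n}"]) (auto simp: idx_def)

lemma idx_lower_bound:
  fixes H :: real
  assumes H: "1/2 < H" "H < 1" and n: "2 \<le> n" and i: "i \<in> idx H n"
  shows "(real n - 1) * (H - 1/2) < real i"
proof -
  have "real_of_int (i_n H n) \<le> real i" using i by (simp add: idx_def)
  moreover have "x_n H n < real_of_int (i_n H n)" unfolding i_n_def by linarith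
  ultimately show ?thesis using x_n_bounds(1)[OF H n] by linarith
qed

lemma diff_Suc_mem_idx:
  fixes H :: real and m :: nat
  assumes H: "1/2 < H" "H < 1" and n: "3 * m + 4 \<le> n"
  shows "n - Suc m \<in> idx H n"
proof -
  have "real_of_int (i_n H n) \<le> x_n H n + 1" unfolding i_n_def by simp
  also have "\<dots> \<le> real (n - Suc m)"
    using x_n_bounds(2)[OF H, of n] n by (simp add: of_nat_diff)
  finally have "i_n H n \<le> int (n - Suc m)" by linarith
  then show ?thesis using n by (auto simp: idx_def)
qed

section \<open>Two-sided bounds for \<open>j_n^H(i)\<close>\<close>

lemma jnH_inner_integral_bounds:
  fixes H :: real and n :: nat and x :: real
  assumes H: "1/2 < H" and x: "0 \<le> x" "x < real n - 1"
  defines "d \<equiv> H - 1/2"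
  shows "(real n - 1) powr d * (((real n - x) powr d - (real n - 1 - x) powr d) / d)
      \<le> (LINT v:{0..1}|lborel. (v + real n - 1) powr (H - 1/2) * (v + real n - 1 - x) powr (H - 3/2))"
    and "(LINT v:{0..1}|lborel. (v + real n - 1) powr (H - 1/2) * (v + real n - 1 - x) powr (H - 3/2))
      \<le> real n powr d * (((real n - x) powr d - (real n - 1 - x) powr d) / d)"
proof -
  define c where "c = real n - 1 - x"
  have c: "0 < c" "1 + c = real n - x" using x by (auto simp: c_def)
  have d: "0 < d" using H by (simp add: d_def)
  have n1: "0 < real n - 1" using x by linarith
  have integrand: "(\<lambda>v. (v + real n - 1) powr (H - 1/2) * (v + real n - 1 - x) powr (H - 3/2))
       = (\<lambda>v. (v + real n - 1) powr d * (v + c) powr (d - 1))"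
    by (simp add: c_def d_def algebra_simps)
  have G: "(LINT v:{0..1}|lborel. (v + c) powr (d - 1)) = ((real n - x) powr d - c powr d) / d"
    using set_integral_shifted_powr[OF c(1) d] c(2) by simp
  have int: "set_integrable lborel {0..1} (\<lambda>v. K * (v + c) powr (d - 1))"
    "set_integrable lborel {0..1} (\<lambda>v. (v + real n - 1) powr d * (v + c) powr (d - 1))" for K
    using c n1 by (auto intro!: borel_integrable_atLeastAtMost' continuous_intros)
  have "(LINT v:{0..1}|lborel. (real n - 1) powr d * (v + c) powr (d - 1))
      \<le> (LINT v:{0..1}|lborel. (v + real n - 1) powr d * (v + c) powr (d - 1))"
    using n1 d by (intro set_integral_mono int mult_right_mono powr_mono2) auto
  moreover have "(LINT v:{0..1}|lborel. (v + real n - 1) powr d * (v + c) powr (d - 1))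
      \<le> (LINT v:{0..1}|lborel. real n powr d * (v + c) powr (d - 1))"
    using n1 d by (intro set_integral_mono int mult_right_mono powr_mono2) auto
  ultimately show "(real n - 1) powr d * (((real n - x) powr d - (real n - 1 - x) powr d) / d)
      \<le> (LINT v:{0..1}|lborel. (v + real n - 1) powr (H - 1/2) * (v + real n - 1 - x) powr (H - 3/2))"
    and "(LINT v:{0..1}|lborel. (v + real n - 1) powr (H - 1/2) * (v + real n - 1 - x) powr (H - 3/2))
      \<le> real n powr d * (((real n - x) powr d - (real n - 1 - x) powr d) / d)"
    unfolding integrand set_integral_mult_right G by (simp_all add: c_def)
qed


lemma jnH_integrand_bounds:
  fixes H :: real and n i :: nat
  assumes H: "1/2 < H" and i: "2 \<le> i" "i < n" and x: "x \<in> {real i - 1..<real i}"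
  defines "d \<equiv> H - 1/2"
  defines "G \<equiv> ((real n - x) powr d - (real n - 1 - x) powr d) / d"
    and "P \<equiv> x powr (1/2 - H) *
      (LINT v:{0..1}|lborel. (v + real n - 1) powr (H - 1/2) * (v + real n - 1 - x) powr (H - 3/2))"
  shows "0 \<le> G" and "G \<le> P" and "P \<le> (real n / (real i - 1)) powr d * G"
proof -
  have d: "0 < d" using H by (simp add: d_def)
  have x0: "1 \<le> x" "x < real n - 1" using x i by auto
  let ?J = "LINT v:{0..1}|lborel. (v + real n - 1) powr (H - 1/2) * (v + real n - 1 - x) powr (H - 3/2)"
  have J: "(real n - 1) powr d * G \<le> ?J" "?J \<le> real n powr d * G"
    using jnH_inner_integral_bounds[OF H _ x0(2)] x0 unfolding G_def d_def by auto
  show G: "0 \<le> G" unfolding G_def using d x0 by (intro divide_nonneg_pos) (auto intro!: powr_mono2)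
  have P: "P = x powr (- d) * ?J" unfolding P_def d_def by simp
  have "x powr d \<le> (real n - 1) powr d" using x0 d by (intro powr_mono2) auto
  then have "x powr d * G \<le> ?J" using G J(1) by (meson mult_right_mono order_trans)
  then have "x powr (- d) * (x powr d * G) \<le> P" unfolding P by (rule mult_left_mono) simp
  moreover have "x powr (- d) * (x powr d * G) = G" using x0 by (simp add: powr_minus)
  ultimately show "G \<le> P" by simp
  have "x powr (- d) \<le> (real i - 1) powr (- d)" using x i d by (intro powr_mono2') auto
  have "P \<le> x powr (- d) * (real n powr d * G)" unfolding P by (rule mult_left_mono[OF J(2)]) simp
  also have "\<dots> \<le> (real i - 1) powr (- d) * (real n powr d * G)"
    by (rule mult_right_mono) (use \<open>x powr (- d) \<le> _\<close> G in auto)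
  also have "\<dots> = (real n / (real i - 1)) powr d * G"
    using i by (simp add: powr_divide powr_minus field_simps)
  finally show "P \<le> (real n / (real i - 1)) powr d * G" .
qed


lemma jnH_bounds:
  fixes H \<sigma> h :: real and n i :: nat
  assumes H: "1/2 < H" "H < 1" and \<sigma>: "0 \<le> \<sigma>" and h: "h = H/2 + 1/4" and i: "2 \<le> i" "i < n"
  shows "2 * g_H \<sigma> H * rho h (n - i) \<le> jnH \<sigma> H n i"
    and "jnH \<sigma> H n i \<le> (real n / (real i - 1)) powr (H - 1/2) * (2 * g_H \<sigma> H * rho h (n - i))"
proof -
  define d where "d = H - 1/2"
  define K where "K = (real n / (real i - 1)) powr d"
  define G where "G x = ((real n - x) powr d - (real n - 1 - x) powr d) / d" for x
  define P where "P x = x powr (1/2 - H) * (LINT v:{0..1}|lborel.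
      (v + real n - 1) powr (H - 1/2) * (v + real n - 1 - x) powr (H - 3/2))" for x
  have bounds: "AE x in lborel. x \<in> {real i - 1..real i} \<longrightarrow> 0 \<le> G x \<and> G x \<le> P x \<and> P x \<le> K * G x"
    using AE_lborel_singleton[of "real i"]
    by eventually_elim (use jnH_integrand_bounds[OF H(1) i] in \<open>auto simp: G_def P_def K_def d_def\<close>)
  have int_G: "set_integrable lborel {real i - 1..real i} G"
    unfolding G_def using i H
    by (intro borel_integrable_atLeastAtMost') (auto intro!: continuous_intros continuous_on_powr' simp: d_def)
  have int_P: "set_integrable lborel {real i - 1..real i} P"
  proof (rule set_integrable_bound[where f = "\<lambda>x. K * G x"])
    show "set_borel_measurable lborel {real i - 1..real i} P"
      unfolding set_borel_measurable_def P_def set_lebesgue_integral_def by measurable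
  qed (use int_G bounds in \<open>auto elim!: AE_mp\<close>)
  have "(LINT x:{real i - 1..real i}|lborel. G x) \<le> (LINT x:{real i - 1..real i}|lborel. P x)"
    by (rule set_integral_mono_AE[OF int_G int_P]) (use bounds in \<open>eventually_elim, auto\<close>)
  moreover have "(LINT x:{real i - 1..real i}|lborel. P x) \<le> K * (LINT x:{real i - 1..real i}|lborel. G x)"
    unfolding set_integral_mult_right[symmetric]
    by (rule set_integral_mono_AE[OF int_P]) (use int_G bounds in \<open>simp, eventually_elim, auto\<close>)
  moreover have "(LINT x:{real i - 1..real i}|lborel. G x) = 2 * rho h (n - i) / (d * (H + 1/2))"
    using set_integral_powr_increment_eq_rho[OF H(1) h i(2)] unfolding G_def d_def .
  moreover have "\<sigma> * C_H H * (2 * rho h (n - i) / (d * (H + 1/2))) = 2 * g_H \<sigma> H * rho h (n - i)"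
    using H by (simp add: C_H_def g_H_def d_def)
  moreover have "jnH \<sigma> H n i = \<sigma> * C_H H * (LINT x:{real i - 1..real i}|lborel. P x)"
    unfolding jnH_def P_def by simp
  moreover have "0 \<le> \<sigma> * C_H H"
    using \<sigma> H unfolding C_H_def c_H_def by (auto intro!: mult_nonneg_nonneg Gamma_real_pos less_imp_le)
  ultimately show "2 * g_H \<sigma> H * rho h (n - i) \<le> jnH \<sigma> H n i"
    and "jnH \<sigma> H n i \<le> (real n / (real i - 1)) powr (H - 1/2) * (2 * g_H \<sigma> H * rho h (n - i))"
    unfolding K_def d_def by (metis mult_left_mono mult.left_commute)+
qed

section \<open>The limit\<close>

text \<open>Counting the index from the top, \<open>i = n - 1 - m\<close>, makes each term converge as
  \<open>n \<rightarrow> \<infinity>\<close> with \<open>m\<close> fixed, so that Tannery's theorem applies.\<close>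

definition jnH_sq_from_end :: "real \<Rightarrow> real \<Rightarrow> nat \<Rightarrow> nat \<Rightarrow> real" where
  "jnH_sq_from_end \<sigma> H n m = (if n - Suc m \<in> idx H n then (jnH \<sigma> H n (n - Suc m))\<^sup>2 else 0)"

lemma sum_idx_eq_suminf_jnH_sq_from_end:
  "(\<Sum>i\<in>idx H n. (jnH \<sigma> H n i)\<^sup>2) = (\<Sum>m. jnH_sq_from_end \<sigma> H n m)"
proof -
  have "(\<Sum>m. jnH_sq_from_end \<sigma> H n m) = (\<Sum>m<n. jnH_sq_from_end \<sigma> H n m)"
    by (rule suminf_finite) (auto simp: jnH_sq_from_end_def idx_def)
  also have "\<dots> = (\<Sum>i<n. if i \<in> idx H n then (jnH \<sigma> H n i)\<^sup>2 else 0)"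
    unfolding jnH_sq_from_end_def by (rule sum.nat_diff_reindex)
  also have "\<dots> = (\<Sum>i\<in>{..<n} \<inter> idx H n. (jnH \<sigma> H n i)\<^sup>2)"
    by (rule sum.inter_restrict[symmetric]) simp
  also have "{..<n} \<inter> idx H n = idx H n" by (auto simp: idx_def)
  finally show ?thesis by simp
qed

lemma jnH_sq_from_end_tendsto:
  fixes H \<sigma> h :: real
  assumes H: "1/2 < H" "H < 1" and \<sigma>: "0 \<le> \<sigma>" and h: "h = H/2 + 1/4"
  shows "(\<lambda>n. jnH_sq_from_end \<sigma> H n m) \<longlonglongrightarrow> (2 * g_H \<sigma> H * rho h (Suc m))\<^sup>2"
proof -
  define A where "A = 2 * g_H \<sigma> H * rho h (Suc m)"
  have large: "\<forall>\<^sub>F n in sequentially. 3 * m + 4 \<le> n" by (rule eventually_ge_at_top)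
  have ratio: "(\<lambda>n. real n / (real (n - Suc m) - 1)) \<longlonglongrightarrow> 1"
  proof (rule Lim_transform_eventually)
    show "(\<lambda>n. real n / (real n - real m - 2)) \<longlonglongrightarrow> 1" by real_asymp
    show "\<forall>\<^sub>F n in sequentially. real n / (real n - real m - 2) = real n / (real (n - Suc m) - 1)"
      using large by eventually_elim (simp add: of_nat_diff)
  qed
  have upper: "(\<lambda>n. (real n / (real (n - Suc m) - 1)) powr (H - 1/2) * A) \<longlonglongrightarrow> A"
    using tendsto_mult[OF tendsto_powr[OF ratio tendsto_const, of "H - 1/2"] tendsto_const[of A]]
    by simp
  have "(\<lambda>n. jnH \<sigma> H n (n - Suc m)) \<longlonglongrightarrow> A"
  proof (rule tendsto_sandwich[OF _ _ tendsto_const upper])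
    show "\<forall>\<^sub>F n in sequentially. A \<le> jnH \<sigma> H n (n - Suc m)"
      using large by eventually_elim (use jnH_bounds(1)[OF H \<sigma> h, of "n - Suc m" n for n] in \<open>simp add: A_def\<close>)
    show "\<forall>\<^sub>F n in sequentially.
        jnH \<sigma> H n (n - Suc m) \<le> (real n / (real (n - Suc m) - 1)) powr (H - 1/2) * A"
      using large by eventually_elim (use jnH_bounds(2)[OF H \<sigma> h, of "n - Suc m" n for n] in \<open>simp add: A_def\<close>)
  qed
  then have "(\<lambda>n. (jnH \<sigma> H n (n - Suc m))\<^sup>2) \<longlonglongrightarrow> A\<^sup>2" by (rule tendsto_power)
  then show ?thesis
    unfolding A_def[symmetric]
  proof (rule Lim_transform_eventually)
    show "\<forall>\<^sub>F n in sequentially. (jnH \<sigma> H n (n - Suc m))\<^sup>2 = jnH_sq_from_end \<sigma> H n m"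
      using large by eventually_elim (use diff_Suc_mem_idx[OF H] in \<open>simp add: jnH_sq_from_end_def\<close>)
  qed
qed


lemma jnH_sq_from_end_le:
  fixes H \<sigma> h :: real
  assumes H: "1/2 < H" "H < 1" and \<sigma>: "0 \<le> \<sigma>" and h: "h = H/2 + 1/4"
    and n: "2 / (H - 1/2) + 2 \<le> real n"
  shows "\<bar>jnH_sq_from_end \<sigma> H n m\<bar>
    \<le> ((4 / (H - 1/2)) powr (H - 1/2))\<^sup>2 * (2 * g_H \<sigma> H * rho h (Suc m))\<^sup>2"
proof (cases "n - Suc m \<in> idx H n")
  case False
  then show ?thesis by (simp add: jnH_sq_from_end_def)
next
  case True
  define \<delta> where "\<delta> = H - 1/2"
  define i where "i = n - Suc m"
  define A where "A = 2 * g_H \<sigma> H * rho h (Suc m)"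
  have \<delta>: "0 < \<delta>" using H by (simp add: \<delta>_def)
  have "2 \<le> real n" using n \<delta> unfolding \<delta>_def[symmetric] by (smt (verit) divide_pos_pos)
  then have n2: "2 \<le> n" by simp
  have nd: "2 \<le> (real n - 1) * \<delta>"
    using n \<delta> by (simp add: \<delta>_def[symmetric] field_simps)
  moreover have "(real n - 1) * \<delta> < real i"
    using idx_lower_bound[OF H n2 True] by (simp add: i_def \<delta>_def)
  ultimately have i1: "(real n - 1) * \<delta> / 2 \<le> real i - 1" and i2: "2 \<le> i" by linarith+
  have ni: "n - i = Suc m" "i < n" using i2 by (auto simp: i_def)
  have A: "A \<le> jnH \<sigma> H n i" "jnH \<sigma> H n i \<le> (real n / (real i - 1)) powr \<delta> * A"
    using jnH_bounds[OF H \<sigma> h i2 ni(2)] unfolding ni(1) A_def \<delta>_def by auto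
  have "0 \<le> A"
    using H \<sigma> rho_nonneg[OF H(1) h, of "Suc m"]
    unfolding A_def g_H_def c_H_def by (auto intro!: mult_nonneg_nonneg divide_nonneg_pos Gamma_real_pos)
  have "real n / (real i - 1) \<le> real n / ((real n - 1) * \<delta> / 2)"
    using i1 nd by (intro divide_left_mono) auto
  also have "\<dots> = 2 * real n / ((real n - 1) * \<delta>)" by simp
  also have "\<dots> \<le> 4 / \<delta>" using \<delta> n2 by (simp add: field_simps)
  finally have "(real n / (real i - 1)) powr \<delta> \<le> (4 / \<delta>) powr \<delta>"
    using i2 \<delta> by (intro powr_mono2) auto
  then have "jnH \<sigma> H n i \<le> (4 / \<delta>) powr \<delta> * A"
    using A \<open>0 \<le> A\<close> by (meson mult_right_mono order_trans)
  then have "(jnH \<sigma> H n i)\<^sup>2 \<le> ((4 / \<delta>) powr \<delta> * A)\<^sup>2"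
    using A \<open>0 \<le> A\<close> by (intro power_mono) auto
  then show ?thesis
    using True by (simp add: jnH_sq_from_end_def i_def A_def \<delta>_def power_mult_distrib)
qed

lemma sum_jnH_sq_tendsto:
  fixes H \<sigma> h :: real
  assumes H: "1/2 < H" "H < 1" and \<sigma>: "0 \<le> \<sigma>" and h: "h = H/2 + 1/4"
  shows "(\<lambda>n. \<Sum>i\<in>idx H n. (jnH \<sigma> H n i)\<^sup>2) \<longlonglongrightarrow> 4 * (g_H \<sigma> H)\<^sup>2 * (\<Sum>k. (rho h (Suc k))\<^sup>2)"
proof -
  define R where "R = ((4 / (H - 1/2)) powr (H - 1/2))\<^sup>2"
  define A where "A m = (2 * g_H \<sigma> H * rho h (Suc m))\<^sup>2" for m
  have A: "A = (\<lambda>m. 4 * (g_H \<sigma> H)\<^sup>2 * (rho h (Suc m))\<^sup>2)"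
    by (auto simp: A_def power_mult_distrib)
  have summable_A: "summable A"
    unfolding A by (intro summable_mult summable_rho_squared[OF H h])
  obtain N :: nat where N: "2 / (H - 1/2) + 2 \<le> real N" using real_arch_simple by blast
  have "(\<lambda>n. \<Sum>m. jnH_sq_from_end \<sigma> H n m) \<longlonglongrightarrow> (\<Sum>m. A m)"
  proof (rule tannerys_theorem[where M = "\<lambda>m. R * A m", THEN conjunct2, THEN conjunct2])
    show "(\<lambda>n. jnH_sq_from_end \<sigma> H n m) \<longlonglongrightarrow> A m" for m
      unfolding A_def by (rule jnH_sq_from_end_tendsto[OF H \<sigma> h])
    show "\<forall>\<^sub>F (m, n) in sequentially \<times>\<^sub>F sequentially. norm (jnH_sq_from_end \<sigma> H n m) \<le> R * A m"
      unfolding eventually_prod_sequentially R_def A_def real_norm_def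
      by (auto intro!: exI[of _ N] jnH_sq_from_end_le[OF H \<sigma> h] order_trans[OF N])
  qed (use summable_A in simp_all)
  moreover have "(\<Sum>m. A m) = 4 * (g_H \<sigma> H)\<^sup>2 * (\<Sum>k. (rho h (Suc k))\<^sup>2)"
    unfolding A by (rule suminf_mult[OF summable_rho_squared[OF H h]])
  ultimately show ?thesis by (simp add: sum_idx_eq_suminf_jnH_sq_from_end)
qed

theorem lemma5p2:
  fixes M :: "'a measure" and \<xi> :: "nat \<Rightarrow> 'a \<Rightarrow> real"
    and H \<sigma> h :: real
  assumes "prob_space M"
    and "1/2 < H" "H < 1" "\<sigma> > 0" "h = H/2 + 1/4"
    and "\<And>i. \<xi> i \<in> borel_measurable M"
    and "prob_space.indep_vars M (\<lambda>_. borel) \<xi> UNIV"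
    and "\<And>i. measure M {\<omega> \<in> space M. \<xi> i \<omega> = 1} = 1/2"
    and "\<And>i. measure M {\<omega> \<in> space M. \<xi> i \<omega> = -1} = 1/2"
  shows "(\<forall>n\<ge>2. prob_space.variance M (Yhat \<sigma> H \<xi> n)
              = (\<Sum>i\<in>idx H n. (jnH \<sigma> H n i)\<^sup>2))
      \<and> summable (\<lambda>k. (rho h (Suc k))\<^sup>2)
      \<and> (\<lambda>n. \<Sum>i\<in>idx H n. (jnH \<sigma> H n i)\<^sup>2)
           \<longlonglongrightarrow> 4 * (g_H \<sigma> H)\<^sup>2 * (\<Sum>k. (rho h (Suc k))\<^sup>2)"
proof (intro conjI allI impI)
  interpret prob_space M by fact
  fix n :: nat
  have "Yhat \<sigma> H \<xi> n = (\<lambda>\<omega>. \<Sum>i\<in>idx H n. jnH \<sigma> H n i * \<xi> i \<omega>)"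
    by (simp add: Yhat_def fun_eq_iff)
  then show "variance (Yhat \<sigma> H \<xi> n) = (\<Sum>i\<in>idx H n. (jnH \<sigma> H n i)\<^sup>2)"
    using variance_Rademacher_sum[OF assms(6-9) finite_idx] by simp
next
  show "summable (\<lambda>k. (rho h (Suc k))\<^sup>2)" by (rule summable_rho_squared[OF assms(2,3,5)])
next
  show "(\<lambda>n. \<Sum>i\<in>idx H n. (jnH \<sigma> H n i)\<^sup>2) \<longlonglongrightarrow> 4 * (g_H \<sigma> H)\<^sup>2 * (\<Sum>k. (rho h (Suc k))\<^sup>2)"
    using sum_jnH_sq_tendsto[OF assms(2,3) _ assms(5)] assms(4) by simp
qed

end
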